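(* Let $c\in\mathsf{ACirc}[0,0]$. Then $[\![c]\!]=\mathrm{id}_0$ (that is, $\{(\bullet,\bullet)\}$) if and only if $c\uparrow$.
   Context: Fix a field $k$. Circuits: terms built from generators with sorts $(n,m)$: copier $\Delta:(1,2)$, discard $!:(1,0)$, amplifier $\mathsf{s}_r:(1,1)$ ($r\in k$), register $\mathsf{x}:(1,1)$, adder $+:(2,1)$, zero $0:(0,1)$, one $\mathbf{1}:(0,1)$; mirror images $\Delta^{op}:(2,1)$, $!^{op}:(0,1)$, $\mathsf{s}_r^{op}$, $\mathsf{x}^{op}:(1,1)$, $+^{op}:(1,2)$, $0^{op}:(1,0)$, $\mathbf{1}^{op}:(1,0)$; $\mathrm{id}_0:(0,0),\mathrm{id}_1:(1,1),\mathrm{sw}:(2,2)$; closed under $;$ and $\oplus$; $\mathsf{ACirc}[n,m]$: circuits of sort $(n,m)$. Denotation over the field $k(x)$ of polynomial fractions: $[\![\Delta]\!]=\{(p,(p,p))\}$, $[\![!]\!]=\{(p,\bullet)\}$, $[\![+]\!]=\{((p,q),p+q)\}$, $[\![0]\!]=\{(\bullet,0)\}$, $[\![\mathbf 1]\!]=\{(\bullet,1)\}$, $[\![\mathsf s_r]\!]=\{(p,rp)\}$, $[\![\mathsf x]\!]=\{(p,px)\}$ ($\bullet$ the unique element of $k(x)^0$); mirrored generators denote converse relations; structural generators denote identity, swap, $\{(\bullet,\bullet)\}$; $;$ is relational composition, $\oplus$ product of relations. Operational semantics: a state is a circuit with a value of $k$ in each register; initial state $c_0$ stores $0$ everywhere.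 Transitions $t\vdash c\xrightarrow[w]{v}c'$ at time $t\in\mathbb Z$: $\Delta$: $a/(a,a)$; $!$: $a/\bullet$; $+$: $(a,b)/a+b$; $0$: $\bullet/0$; $\mathsf s_r$: $a/ra$; $\mathsf x$ storing $b$: $a/b$, then stores $a$; $\mathbf 1$: $\bullet/1$ if $t=0$, $\bullet/0$ otherwise; mirrored generators: the same with left/right labels exchanged; $\mathrm{id}_1$: $a/a$; $\mathrm{sw}$: $(a,b)/(b,a)$; $\mathrm{id}_0$: $\bullet/\bullet$; in $c;d$ both components move at time $t$ agreeing on the shared middle label; in $c\oplus d$ both move at time $t$ with labels concatenated. A computation of $c$ starting at time $t\le0$ is a sequence of transitions $t\vdash c_0\to c_1$, $t+1\vdash c_1\to c_2,\dots$ from the initial state. For $c\in\mathsf{ACirc}[0,0]$, $c\uparrow$ means $c$ can perform an infinite computation. *)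

theory Defs
  imports "HOL-Computational_Algebra.Polynomial" "HOL-Computational_Algebra.Fraction_Field"
begin

(* Circuit terms.  's = type of amplifier scalars (the field k),
   'r = content of registers: unit for bare circuits, k for states. *)
datatype ('s, 'r) circ =
    Copy | Disc | Amp 's | Reg 'r | Add | Zero | One
  | CopyOp | DiscOp | AmpOp 's | RegOp 'r | AddOp | ZeroOp | OneOp
  | Id0 | Id1 | Sw
  | Seq "('s, 'r) circ" "('s, 'r) circ"
  | Par "('s, 'r) circ" "('s, 'r) circ"

type_synonym 'k circuit = "('k, unit) circ"
type_synonym 'k state = "('k, 'k) circ"

inductive has_sort :: "('s, 'r) circ \<Rightarrow> nat \<Rightarrow> nat \<Rightarrow> bool" where
  "has_sort Copy 1 2"
| "has_sort Disc 1 0"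
| "has_sort (Amp r) 1 1"
| "has_sort (Reg u) 1 1"
| "has_sort Add 2 1"
| "has_sort Zero 0 1"
| "has_sort One 0 1"
| "has_sort CopyOp 2 1"
| "has_sort DiscOp 0 1"
| "has_sort (AmpOp r) 1 1"
| "has_sort (RegOp u) 1 1"
| "has_sort AddOp 1 2"
| "has_sort ZeroOp 1 0"
| "has_sort OneOp 1 0"
| "has_sort Id0 0 0"
| "has_sort Id1 1 1"
| "has_sort Sw 2 2"
| "has_sort c n m \<Longrightarrow> has_sort d m l \<Longrightarrow> has_sort (Seq c d) n l"
| "has_sort c n m \<Longrightarrow> has_sort d n' m' \<Longrightarrow> has_sort (Par c d) (n + n') (m + m')"

definition ACirc :: "nat \<Rightarrow> nat \<Rightarrow> 'k circuit set" where
  "ACirc n m = {c. has_sort c n m}"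

definition kconst :: "'k::field \<Rightarrow> 'k poly fract" where
  "kconst r = Fract [:r:] 1"

definition xvar :: "'k::field poly fract" where
  "xvar = Fract [:0, 1:] 1"

type_synonym 'k rel = "('k poly fract list \<times> 'k poly fract list) set"

fun den :: "('k::field, 'r) circ \<Rightarrow> 'k rel" where
  "den Copy = {([p], [p, p]) | p. True}"
| "den Disc = {([p], []) | p. True}"
| "den (Amp r) = {([p], [kconst r * p]) | p. True}"
| "den (Reg u) = {([p], [p * xvar]) | p. True}"
| "den Add = {([p, q], [p + q]) | p q. True}"
| "den Zero = {([], [0])}"
| "den One = {([], [1])}"
| "den CopyOp = {([p], [p, p]) | p. True}\<inverse>"
| "den DiscOp = {([p], []) | p. True}\<inverse>"
| "den (AmpOp r) = {([p], [kconst r * p]) | p. True}\<inverse>"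
| "den (RegOp u) = {([p], [p * xvar]) | p. True}\<inverse>"
| "den AddOp = {([p, q], [p + q]) | p q. True}\<inverse>"
| "den ZeroOp = {([], [0])}\<inverse>"
| "den OneOp = {([], [1])}\<inverse>"
| "den Id0 = {([], [])}"
| "den Id1 = {([p], [p]) | p. True}"
| "den Sw = {([p, q], [q, p]) | p q. True}"
| "den (Seq c d) = den c O den d"
| "den (Par c d) = {(u1 @ u2, v1 @ v2) | u1 u2 v1 v2. (u1, v1) \<in> den c \<and> (u2, v2) \<in> den d}"

(* Operational semantics: step t s u v s' means  t |- s --u/v--> s'
   (u = left label, v = right label, lists of values in k) *)
inductive step :: "int \<Rightarrow> ('k::field) state \<Rightarrow> 'k list \<Rightarrow> 'k list \<Rightarrow> 'k state \<Rightarrow> bool" where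
  "step t Copy [a] [a, a] Copy"
| "step t Disc [a] [] Disc"
| "step t Add [a, b] [a + b] Add"
| "step t Zero [] [0] Zero"
| "step t (Amp r) [a] [r * a] (Amp r)"
| "step t (Reg b) [a] [b] (Reg a)"
| "step t One [] [if t = 0 then 1 else 0] One"
| "step t CopyOp [a, a] [a] CopyOp"
| "step t DiscOp [] [a] DiscOp"
| "step t AddOp [a + b] [a, b] AddOp"
| "step t ZeroOp [0] [] ZeroOp"
| "step t (AmpOp r) [r * a] [a] (AmpOp r)"
| "step t (RegOp b) [b] [a] (RegOp a)"
| "step t OneOp [if t = 0 then 1 else 0] [] OneOp"
| "step t Id1 [a] [a] Id1"
| "step t Sw [a, b] [b, a] Sw"
| "step t Id0 [] [] Id0"
| "step t c u v c' \<Longrightarrow> step t d v w d' \<Longrightarrow> step t (Seq c d) u w (Seq c' d')"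
| "step t c u1 v1 c' \<Longrightarrow> step t d u2 v2 d' \<Longrightarrow>
     step t (Par c d) (u1 @ u2) (v1 @ v2) (Par c' d')"

definition init_state :: "'k::field circuit \<Rightarrow> 'k state" where
  "init_state c = map_circ id (\<lambda>_. 0) c"

(* c can perform an infinite computation, starting at some time t \<le> 0
   (labels of a (0,0) circuit are empty) *)
definition diverges :: "'k::field circuit \<Rightarrow> bool" where
  "diverges c \<longleftrightarrow> (\<exists>t::int. t \<le> 0 \<and> (\<exists>s :: nat \<Rightarrow> 'k state.
      s 0 = init_state c \<and> (\<forall>n. step (t + int n) (s n) [] [] (s (Suc n)))))"

end

theory Submission
  imports
    Defs
    "HOL-Computational_Algebra.Formal_Laurent_Series"
    "HOL-Computational_Algebra.Polynomial_FPS"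
begin

(* Read k(x) inside the field k((x)) of formal Laurent series.  A list of Laurent series
   whose coefficients vanish below time t is the same thing as a sequence of labels from time
   t on, the coefficient of x^k being the value on the wire at time k.  Under this reading a
   register is multiplication by x (a delay by one step, starting from 0), the constant 1 is
   the impulse at time 0, and composition of computations matches composition of relations.
   Hence a computation starting at some t <= 0 yields a solution over k((x)) of the circuit
   equations, and conversely every solution over k((x)) is realised by a computation starting
   at any sufficiently early time.  For a circuit of sort (0,0) the only candidate solution is
   ([], []), and it exists over k((x)) iff it exists over k(x): one direction by the
   embedding, the other by a k(x)-linear retraction of k((x)) onto k(x) fixing 1, since the
   circuit equations are linear over k(x) with constant terms 0 and 1. *)

unbundle fps_syntax

inductive_simps step_simps:
  "step t Copy u v s'" "step t Disc u v s'" "step t (Amp r) u v s'" "step t (Reg b) u v s'"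
  "step t Add u v s'" "step t Zero u v s'" "step t One u v s'"
  "step t CopyOp u v s'" "step t DiscOp u v s'" "step t (AmpOp r) u v s'" "step t (RegOp b) u v s'"
  "step t AddOp u v s'" "step t ZeroOp u v s'" "step t OneOp u v s'"
  "step t Id0 u v s'" "step t Id1 u v s'" "step t Sw u v s'"
  "step t (Seq c d) u v s'" "step t (Par c d) u v s'"

inductive_simps has_sort_simps:
  "has_sort Copy n m" "has_sort Disc n m" "has_sort (Amp r) n m" "has_sort (Reg b) n m"
  "has_sort Add n m" "has_sort Zero n m" "has_sort One n m"
  "has_sort CopyOp n m" "has_sort DiscOp n m" "has_sort (AmpOp r) n m" "has_sort (RegOp b) n m"
  "has_sort AddOp n m" "has_sort ZeroOp n m" "has_sort OneOp n m"
  "has_sort Id0 n m" "has_sort Id1 n m" "has_sort Sw n m"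
  "has_sort (Seq c d) n m" "has_sort (Par c d) n m"

section \<open>Circuit semantics over an arbitrary field\<close>

fun den_in :: "('s \<Rightarrow> 'f::field) \<Rightarrow> 'f \<Rightarrow> ('s, 'r) circ \<Rightarrow> ('f list \<times> 'f list) set"
  where
  "den_in K X Copy = {([p], [p, p]) | p. True}"
| "den_in K X Disc = {([p], []) | p. True}"
| "den_in K X (Amp r) = {([p], [K r * p]) | p. True}"
| "den_in K X (Reg u) = {([p], [p * X]) | p. True}"
| "den_in K X Add = {([p, q], [p + q]) | p q. True}"
| "den_in K X Zero = {([], [0])}"
| "den_in K X One = {([], [1])}"
| "den_in K X CopyOp = {([p], [p, p]) | p. True}\<inverse>"
| "den_in K X DiscOp = {([p], []) | p. True}\<inverse>"
| "den_in K X (AmpOp r) = {([p], [K r * p]) | p. True}\<inverse>"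
| "den_in K X (RegOp u) = {([p], [p * X]) | p. True}\<inverse>"
| "den_in K X AddOp = {([p, q], [p + q]) | p q. True}\<inverse>"
| "den_in K X ZeroOp = {([], [0])}\<inverse>"
| "den_in K X OneOp = {([], [1])}\<inverse>"
| "den_in K X Id0 = {([], [])}"
| "den_in K X Id1 = {([p], [p]) | p. True}"
| "den_in K X Sw = {([p, q], [q, p]) | p q. True}"
| "den_in K X (Seq c d) = den_in K X c O den_in K X d"
| "den_in K X (Par c d) =
     {(u1 @ u2, v1 @ v2) | u1 u2 v1 v2. (u1, v1) \<in> den_in K X c \<and> (u2, v2) \<in> den_in K X d}"

lemma den_eq_den_in: "den c = den_in kconst xvar c"
  by (induction c) auto

lemma den_in_map:
  fixes g :: "'a::field \<Rightarrow> 'b::field"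
  assumes uv: "(u, v) \<in> den_in K X c"
    and add: "\<And>x y. g (x + y) = g x + g y" and one: "g 1 = 1"
    and scale: "\<And>r p. g (K r * p) = K' r * g p" and shift: "\<And>p. g (p * X) = g p * X'"
  shows "(map g u, map g v) \<in> den_in K' X' c"
proof -
  have zero: "g 0 = 0"
    using add[of 0 0] by (metis add.right_neutral add_left_cancel)
  from uv show ?thesis
  proof (induction c arbitrary: u v)
    case (Seq c d)
    then show ?case by fastforce
  next
    case (Par c d)
    then show ?case by fastforce
  qed (use add one scale shift zero in auto)
qed

lemma den_in_length:
  "has_sort c n m \<Longrightarrow> (u, v) \<in> den_in K X c \<Longrightarrow> length u = n \<and> length v = m"
proof (induction c arbitrary: n m u v)
  case (Seq c d)
  then show ?case by (simp add: has_sort_simps) blast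
qed (auto simp: has_sort_simps)

section \<open>Rational functions as Laurent series\<close>

abbreviation den_fls :: "('k::field, 'r) circ \<Rightarrow> ('k fls list \<times> 'k fls list) set" where
  "den_fls \<equiv> den_in fls_const fls_X"

abbreviation fls_of_poly :: "'k::field poly \<Rightarrow> 'k fls" where
  "fls_of_poly p \<equiv> fps_to_fls (fps_of_poly p)"

lemma fls_of_poly_add: "fls_of_poly (a + b) = fls_of_poly a + fls_of_poly b"
  by (simp add: fps_of_poly_add)

lemma fls_of_poly_mult: "fls_of_poly (a * b) = fls_of_poly a * fls_of_poly b"
  by (simp add: fps_of_poly_mult fls_times_fps_to_fls)

lift_definition fls_of_fract :: "'k::field poly fract \<Rightarrow> 'k fls" is
  "\<lambda>(a, b). fls_of_poly a / fls_of_poly b"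
proof (clarsimp simp: fractrel_def)
  fix a b c d :: "'k poly"
  assume "b \<noteq> 0" "d \<noteq> 0" "a * d = c * b"
  then show "fls_of_poly a / fls_of_poly b = fls_of_poly c / fls_of_poly d"
    by (simp add: frac_eq_eq flip: fls_of_poly_mult)
qed

lemma fls_of_fract_Fract:
  "b \<noteq> 0 \<Longrightarrow> fls_of_fract (Fract a b) = fls_of_poly a / fls_of_poly b"
  by transfer simp

lemma fls_of_fract_add: "fls_of_fract (x + y) = fls_of_fract x + fls_of_fract y"
  by (induction x; induction y)
    (simp add: fls_of_fract_Fract fls_of_poly_add fls_of_poly_mult field_simps)

lemma fls_of_fract_mult: "fls_of_fract (x * y) = fls_of_fract x * fls_of_fract y"
  by (induction x; induction y) (simp add: fls_of_fract_Fract fls_of_poly_mult)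

lemma fls_of_fract_one: "fls_of_fract 1 = 1"
  by (simp add: One_fract_def fls_of_fract_Fract)

lemma fls_of_fract_kconst: "fls_of_fract (kconst r) = fls_const r"
  by (simp add: kconst_def fls_of_fract_Fract fps_of_poly_const)

lemma fls_of_fract_xvar: "fls_of_fract xvar = fls_X"
  by (simp add: xvar_def fls_of_fract_Fract)

lemma fls_of_fract_linear_retraction:
  obtains g :: "'k::field fls \<Rightarrow> 'k poly fract"
  where "\<And>x y. g (x + y) = g x + g y" "\<And>a x. g (fls_of_fract a * x) = a * g x" "g 1 = 1"
proof -
  interpret V1: vector_space "\<lambda>a (x::'k fls). fls_of_fract a * x"
    by unfold_locales (simp_all add: fls_of_fract_add fls_of_fract_mult fls_of_fract_one algebra_simps)
  interpret V2: vector_space "(*) :: 'k poly fract \<Rightarrow> _"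
    by unfold_locales (simp_all add: algebra_simps)
  interpret VP: vector_space_pair
    "\<lambda>a (x::'k fls). fls_of_fract a * x" "(*) :: 'k poly fract \<Rightarrow> _"
    by unfold_locales
  have "V1.independent {1}"
    using V1.independent_insert[of 1 "{}"] V1.span_empty by simp
  from VP.linear_independent_extend[OF this, of "\<lambda>_. 1"]
  obtain g where "Vector_Spaces.linear (\<lambda>a (x::'k fls). fls_of_fract a * x) (*) g" "g 1 = 1"
    by auto
  then have hom: "module_hom (\<lambda>a (x::'k fls). fls_of_fract a * x) (*) g"
    by (simp add: Vector_Spaces.linear_def)
  show thesis
  proof (rule that)
    show "g (x + y) = g x + g y" for x y
      using hom by (rule module_hom.add)
    show "g (fls_of_fract a * x) = a * g x" for a x
      using hom by (rule module_hom.scale)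
  qed fact
qed

lemma Nil_mem_den_iff_den_fls:
  fixes c :: "('k::field, 'r) circ"
  shows "([], []) \<in> den c \<longleftrightarrow> ([], []) \<in> den_fls c"
proof
  assume "([], []) \<in> den c"
  then have "(map fls_of_fract [], map fls_of_fract []) \<in> den_fls c"
    by (intro den_in_map[where K = kconst and X = xvar])
       (simp_all add: den_eq_den_in fls_of_fract_add fls_of_fract_one fls_of_fract_mult
         fls_of_fract_kconst fls_of_fract_xvar)
  then show "([], []) \<in> den_fls c" by simp
next
  assume fls: "([], []) \<in> den_fls c"
  obtain g :: "'k fls \<Rightarrow> 'k poly fract"
    where add: "\<And>x y. g (x + y) = g x + g y"
      and linear: "\<And>a x. g (fls_of_fract a * x) = a * g x" and one: "g 1 = 1"
    using fls_of_fract_linear_retraction by blast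
  have "(map g [], map g []) \<in> den_in kconst xvar c"
    using fls by (rule den_in_map)
      (use add one linear[of "kconst _"] linear[of xvar] in
        \<open>simp_all add: fls_of_fract_kconst fls_of_fract_xvar mult.commute\<close>)
  then show "([], []) \<in> den c" by (simp add: den_eq_den_in)
qed

section \<open>Computations\<close>

lemma has_sort_unique: "has_sort c n m \<Longrightarrow> has_sort c n' m' \<Longrightarrow> n' = n \<and> m' = m"
proof (induction c arbitrary: n m n' m')
  case (Seq c d)
  then show ?case by (simp add: has_sort_simps) metis
next
  case (Par c d)
  then show ?case by (clarsimp simp: has_sort_simps) metis
qed (auto simp: has_sort_simps)

lemma has_sort_map_circ: "has_sort (map_circ f g c) n m \<longleftrightarrow> has_sort c n m"
  by (induction c arbitrary: n m) (simp_all add: has_sort_simps)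

lemma step_has_sort: "step t s u v s' \<Longrightarrow> has_sort s (length u) (length v)"
  by (induction rule: step.induct) (auto simp: has_sort_simps)

lemma step_preserves_has_sort: "step t s u v s' \<Longrightarrow> has_sort s' = has_sort s"
  by (induction rule: step.induct) (simp_all add: has_sort_simps fun_eq_iff)

fun stateless :: "('s, 'r) circ \<Rightarrow> bool" where
  "stateless (Reg _) = False"
| "stateless (RegOp _) = False"
| "stateless (Seq _ _) = False"
| "stateless (Par _ _) = False"
| "stateless _ = True"

lemma stateless_step_same: "stateless s \<Longrightarrow> step t s u v s' \<Longrightarrow> s' = s"
  by (cases s) (auto simp: step_simps)

abbreviation is_run ::
    "int \<Rightarrow> (nat \<Rightarrow> 'k::field state) \<Rightarrow> (nat \<Rightarrow> 'k list) \<Rightarrow> (nat \<Rightarrow> 'k list) \<Rightarrow> bool"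
  where "is_run t s U V \<equiv> \<forall>n. step (t + int n) (s n) (U n) (V n) (s (Suc n))"

definition has_computation ::
    "'k::field circuit \<Rightarrow> int \<Rightarrow> (nat \<Rightarrow> 'k list) \<Rightarrow> (nat \<Rightarrow> 'k list) \<Rightarrow> bool"
  where "has_computation c t U V \<longleftrightarrow> (\<exists>s. s 0 = init_state c \<and> is_run t s U V)"

lemma diverges_iff_has_computation:
  "diverges c \<longleftrightarrow> (\<exists>t\<le>0. has_computation c t (\<lambda>_. []) (\<lambda>_. []))"
  by (simp add: diverges_def has_computation_def)

lemma run_invariant:
  assumes "P (s 0)" and "is_run t s U V"
    and "\<And>k x u v y. step k x u v y \<Longrightarrow> P x \<Longrightarrow> P y"
  shows "P (s n)"
  by (induction n) (use assms in blast)+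

lemma has_computation_Seq:
  "has_computation (Seq c d) t U V \<longleftrightarrow>
    (\<exists>W. has_computation c t U W \<and> has_computation d t W V)"
proof
  assume "has_computation (Seq c d) t U V"
  then obtain s where s0: "s 0 = Seq (init_state c) (init_state d)" and run: "is_run t s U V"
    by (auto simp: has_computation_def init_state_def)
  have "\<exists>a b. s n = Seq a b" for n
    by (rule run_invariant[OF _ run]) (use s0 in \<open>auto simp: step_simps\<close>)
  then obtain A B where AB: "\<And>n. s n = Seq (A n) (B n)"
    by metis
  with run have "\<forall>n. \<exists>w. step (t + int n) (A n) (U n) w (A (Suc n)) \<and>
      step (t + int n) (B n) w (V n) (B (Suc n))"
    by (auto simp: step_simps)
  then obtain W where "is_run t A U W" "is_run t B W V"
    by metis
  moreover have "A 0 = init_state c" "B 0 = init_state d"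
    using AB[of 0] s0 by simp_all
  ultimately show "\<exists>W. has_computation c t U W \<and> has_computation d t W V"
    unfolding has_computation_def by blast
next
  assume "\<exists>W. has_computation c t U W \<and> has_computation d t W V"
  then obtain W s1 s2
    where "s1 0 = init_state c" "is_run t s1 U W" "s2 0 = init_state d" "is_run t s2 W V"
    unfolding has_computation_def by blast
  then show "has_computation (Seq c d) t U V"
    unfolding has_computation_def
    by (intro exI[of _ "\<lambda>n. Seq (s1 n) (s2 n)"]) (auto simp: init_state_def intro: step.intros)
qed

lemma has_computation_Par:
  "has_computation (Par c d) t U V \<longleftrightarrow>
    (\<exists>U1 U2 V1 V2. U = (\<lambda>n. U1 n @ U2 n) \<and> V = (\<lambda>n. V1 n @ V2 n) \<and>
      has_computation c t U1 V1 \<and> has_computation d t U2 V2)"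
proof
  assume "has_computation (Par c d) t U V"
  then obtain s where s0: "s 0 = Par (init_state c) (init_state d)" and run: "is_run t s U V"
    by (auto simp: has_computation_def init_state_def)
  have "\<exists>a b. s n = Par a b" for n
    by (rule run_invariant[OF _ run]) (use s0 in \<open>auto simp: step_simps\<close>)
  then obtain A B where AB: "\<And>n. s n = Par (A n) (B n)"
    by metis
  with run have "\<forall>n. \<exists>u1 u2 v1 v2. U n = u1 @ u2 \<and> V n = v1 @ v2 \<and>
      step (t + int n) (A n) u1 v1 (A (Suc n)) \<and> step (t + int n) (B n) u2 v2 (B (Suc n))"
    by (fastforce simp: step_simps)
  then obtain U1 U2 V1 V2 where "\<forall>n. U n = U1 n @ U2 n \<and> V n = V1 n @ V2 n"
    "is_run t A U1 V1" "is_run t B U2 V2"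
    by metis
  moreover have "A 0 = init_state c" "B 0 = init_state d"
    using AB[of 0] s0 by simp_all
  ultimately show "\<exists>U1 U2 V1 V2. U = (\<lambda>n. U1 n @ U2 n) \<and> V = (\<lambda>n. V1 n @ V2 n) \<and>
      has_computation c t U1 V1 \<and> has_computation d t U2 V2"
    unfolding has_computation_def fun_eq_iff by blast
next
  assume "\<exists>U1 U2 V1 V2. U = (\<lambda>n. U1 n @ U2 n) \<and> V = (\<lambda>n. V1 n @ V2 n) \<and>
      has_computation c t U1 V1 \<and> has_computation d t U2 V2"
  then obtain U1 U2 V1 V2 s1 s2 where "U = (\<lambda>n. U1 n @ U2 n)" "V = (\<lambda>n. V1 n @ V2 n)"
    "s1 0 = init_state c" "is_run t s1 U1 V1" "s2 0 = init_state d" "is_run t s2 U2 V2"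
    unfolding has_computation_def by blast
  then show "has_computation (Par c d) t U V"
    unfolding has_computation_def
    by (intro exI[of _ "\<lambda>n. Par (s1 n) (s2 n)"]) (auto simp: init_state_def intro: step.intros)
qed

lemma has_computation_Reg:
  "has_computation (Reg x) t U V \<longleftrightarrow>
    (\<exists>b. b 0 = 0 \<and> (\<forall>n. U n = [b (Suc n)] \<and> V n = [b n]))"
proof
  assume "has_computation (Reg x) t U V"
  then obtain s where s0: "s 0 = Reg 0" and run: "is_run t s U V"
    by (auto simp: has_computation_def init_state_def)
  have "\<exists>b. s n = Reg b" for n
    by (rule run_invariant[OF _ run]) (use s0 in \<open>auto simp: step_simps\<close>)
  then obtain b where "\<And>n. s n = Reg (b n)"
    by metis
  with s0 run show "\<exists>b. b 0 = 0 \<and> (\<forall>n. U n = [b (Suc n)] \<and> V n = [b n])"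
    by (auto simp: step_simps)
next
  assume "\<exists>b. b 0 = 0 \<and> (\<forall>n. U n = [b (Suc n)] \<and> V n = [b n])"
  then obtain b where "b 0 = 0" "\<forall>n. U n = [b (Suc n)] \<and> V n = [b n]"
    by blast
  then show "has_computation (Reg x) t U V"
    unfolding has_computation_def
    by (intro exI[of _ "\<lambda>n. Reg (b n)"]) (auto simp: init_state_def step_simps)
qed

lemma has_computation_RegOp:
  "has_computation (RegOp x) t U V \<longleftrightarrow>
    (\<exists>b. b 0 = 0 \<and> (\<forall>n. U n = [b n] \<and> V n = [b (Suc n)]))"
proof
  assume "has_computation (RegOp x) t U V"
  then obtain s where s0: "s 0 = RegOp 0" and run: "is_run t s U V"
    by (auto simp: has_computation_def init_state_def)
  have "\<exists>b. s n = RegOp b" for n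
    by (rule run_invariant[OF _ run]) (use s0 in \<open>auto simp: step_simps\<close>)
  then obtain b where "\<And>n. s n = RegOp (b n)"
    by metis
  with s0 run show "\<exists>b. b 0 = 0 \<and> (\<forall>n. U n = [b n] \<and> V n = [b (Suc n)])"
    by (auto simp: step_simps)
next
  assume "\<exists>b. b 0 = 0 \<and> (\<forall>n. U n = [b n] \<and> V n = [b (Suc n)])"
  then obtain b where "b 0 = 0" "\<forall>n. U n = [b n] \<and> V n = [b (Suc n)]"
    by blast
  then show "has_computation (RegOp x) t U V"
    unfolding has_computation_def
    by (intro exI[of _ "\<lambda>n. RegOp (b n)"]) (auto simp: init_state_def step_simps)
qed

lemma has_computation_stateless:
  assumes "stateless c"
  shows "has_computation c t U V \<longleftrightarrow>
    (\<forall>n. step (t + int n) (init_state c) (U n) (V n) (init_state c))"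
proof
  have stateless_init: "stateless (init_state c)"
    using assms by (cases c) (simp_all add: init_state_def)
  assume "has_computation c t U V"
  then obtain s where s0: "s 0 = init_state c" and run: "is_run t s U V"
    by (auto simp: has_computation_def)
  have "s n = init_state c" for n
    by (rule run_invariant[OF _ run]) (use s0 stateless_step_same[OF stateless_init] in blast)+
  with run show "\<forall>n. step (t + int n) (init_state c) (U n) (V n) (init_state c)"
    by metis
qed (auto simp: has_computation_def)

lemma has_computation_has_sort:
  assumes "has_computation c t U V"
  shows "has_sort c (length (U n)) (length (V n))"
proof -
  obtain s where s0: "s 0 = init_state c" and run: "is_run t s U V"
    using assms by (auto simp: has_computation_def)
  have "has_sort (s n) = has_sort c"
    by (rule run_invariant[OF _ run])
      (simp_all add: s0 init_state_def has_sort_map_circ fun_eq_iff step_preserves_has_sort)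
  with run step_has_sort show ?thesis
    by metis
qed

lemma has_computation_length:
  assumes "has_computation c t U V"
  shows "length (U n) = length (U 0)" "length (V n) = length (V 0)"
  using has_sort_unique has_computation_has_sort[OF assms] by metis+

section \<open>Computations as Laurent-series solutions\<close>

definition coeffs_at :: "int \<Rightarrow> 'k::zero fls list \<Rightarrow> 'k list" where
  "coeffs_at k u = map (\<lambda>p. p $$ k) u"

lemma coeffs_at_append [simp]: "coeffs_at k (u @ v) = coeffs_at k u @ coeffs_at k v"
  by (simp add: coeffs_at_def)

abbreviation labels :: "int \<Rightarrow> 'k::zero fls list \<Rightarrow> nat \<Rightarrow> 'k list" where
  "labels t u \<equiv> \<lambda>n. coeffs_at (t + int n) u"

definition fls_from :: "int \<Rightarrow> (nat \<Rightarrow> 'k::zero) \<Rightarrow> 'k fls" where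
  "fls_from t f = fls_shift (- t) (fps_to_fls (Abs_fps f))"

lemma fls_from_nth [simp]: "fls_from t f $$ k = (if k < t then 0 else f (nat (k - t)))"
  by (simp add: fls_from_def)

lemma fls_from_Suc_times_X:
  fixes f :: "nat \<Rightarrow> 'k::field"
  assumes "f 0 = 0"
  shows "fls_from t (\<lambda>n. f (Suc n)) * fls_X = fls_from t f"
proof (rule fls_eqI)
  fix k
  have "k - 1 < t \<and> \<not> k < t \<Longrightarrow> k = t"
    and "\<not> k - 1 < t \<Longrightarrow> Suc (nat (k - 1 - t)) = nat (k - t)"
    by simp_all
  then show "(fls_from t (\<lambda>n. f (Suc n)) * fls_X) $$ k = fls_from t f $$ k"
    using assms by (auto simp: fls_X_times_conv_shift)
qed

definition fls_of_labels :: "int \<Rightarrow> (nat \<Rightarrow> 'k::zero list) \<Rightarrow> 'k fls list" where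
  "fls_of_labels t U = map (\<lambda>i. fls_from t (\<lambda>n. U n ! i)) [0..<length (U 0)]"

lemma coeffs_at_fls_of_labels:
  assumes "\<And>n. length (U n) = m"
  shows "coeffs_at k (fls_of_labels t U) = (if k < t then replicate m 0 else U (nat (k - t)))"
  using assms by (auto simp: coeffs_at_def fls_of_labels_def intro: nth_equalityI)

lemma fls_of_labels_append:
  assumes "\<And>n. length (U n) = m"
  shows "fls_of_labels t (\<lambda>n. U n @ V n) = fls_of_labels t U @ fls_of_labels t V"
  using assms
  by (auto simp: fls_of_labels_def nth_append intro!: nth_equalityI arg_cong[where f = "fls_from t"] ext)

lemma stateless_step_coeffs_at:
  fixes c :: "'k::field circuit"
  assumes "stateless c" and "(u, v) \<in> den_fls c"
  shows "step k (init_state c) (coeffs_at k u) (coeffs_at k v) (init_state c)"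
  using assms by (cases c) (auto simp: init_state_def coeffs_at_def step_simps)

lemma stateless_den_fls_of_steps:
  fixes c :: "'k::field circuit"
  assumes "stateless c"
    and steps: "\<And>k. step k (init_state c) (coeffs_at k u) (coeffs_at k v) (init_state c)"
  shows "(u, v) \<in> den_fls c"
proof -
  have "has_sort c (length u) (length v)"
    using step_has_sort[OF steps] by (simp add: coeffs_at_def init_state_def has_sort_map_circ)
  with assms show ?thesis
    by (cases c) (auto simp: init_state_def has_sort_simps length_Suc_conv numeral_2_eq_2 coeffs_at_def
        step_simps intro!: fls_eqI)
qed

lemma stateless_step_replicate_0:
  assumes "stateless c" and "has_sort c n m" and "k \<noteq> 0"
  shows "step k (init_state c) (replicate n 0) (replicate m 0) (init_state c)"
  using assms by (cases c) (auto simp: init_state_def has_sort_simps numeral_2_eq_2 step_simps)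

lemma stateless_has_computation_den_fls:
  fixes c :: "'k::field circuit"
  assumes "stateless c" and "t \<le> 0" and comp: "has_computation c t U V"
  shows "(fls_of_labels t U, fls_of_labels t V) \<in> den_fls c"
proof (rule stateless_den_fls_of_steps[OF \<open>stateless c\<close>])
  fix k
  have steps: "step (t + int n) (init_state c) (U n) (V n) (init_state c)" for n
    using comp by (simp add: has_computation_stateless[OF \<open>stateless c\<close>])
  have coeffs_U: "coeffs_at k (fls_of_labels t U) =
      (if k < t then replicate (length (U 0)) 0 else U (nat (k - t)))"
    and coeffs_V: "coeffs_at k (fls_of_labels t V) =
      (if k < t then replicate (length (V 0)) 0 else V (nat (k - t)))"
    by (rule coeffs_at_fls_of_labels, rule has_computation_length[OF comp])+
  show "step k (init_state c)
      (coeffs_at k (fls_of_labels t U)) (coeffs_at k (fls_of_labels t V)) (init_state c)"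
  proof (cases "k < t")
    \<comment> \<open>Before time t every wire carries 0: a legal step, except for the impulse of One at time 0.\<close>
    case True
    with \<open>t \<le> 0\<close> have "k \<noteq> 0"
      by simp
    with True show ?thesis
      unfolding coeffs_U coeffs_V
      using has_computation_has_sort[OF comp, of 0] stateless_step_replicate_0 \<open>stateless c\<close>
      by simp
  next
    case False
    then show ?thesis
      unfolding coeffs_U coeffs_V using steps[of "nat (k - t)"] by simp
  qed
qed

lemma den_fls_has_computation:
  fixes c :: "'k::field circuit"
  assumes "(u, v) \<in> den_fls c"
  shows "\<forall>\<^sub>F t in at_bot. has_computation c t (labels t u) (labels t v)"
  using assms
proof (induction c arbitrary: u v)
  case (Seq c d)
  then obtain w where uw: "(u, w) \<in> den_fls c" and wv: "(w, v) \<in> den_fls d"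
    by auto
  have "\<forall>\<^sub>F t in at_bot. has_computation c t (labels t u) (labels t w)
      \<and> has_computation d t (labels t w) (labels t v)"
    by (rule eventually_conj[OF Seq.IH(1)[OF uw] Seq.IH(2)[OF wv]])
  then show ?case
    by (rule eventually_mono) (auto simp: has_computation_Seq)
next
  case (Par c d)
  then obtain u1 u2 v1 v2 where uv: "u = u1 @ u2" "v = v1 @ v2"
    and uv1: "(u1, v1) \<in> den_fls c" and uv2: "(u2, v2) \<in> den_fls d"
    by auto
  have "\<forall>\<^sub>F t in at_bot. has_computation c t (labels t u1) (labels t v1)
      \<and> has_computation d t (labels t u2) (labels t v2)"
    by (rule eventually_conj[OF Par.IH(1)[OF uv1] Par.IH(2)[OF uv2]])
  then show ?case
    by (rule eventually_mono) (force simp: uv has_computation_Par)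
next
  case (Reg x)
  then obtain p where "u = [p]" "v = [p * fls_X]"
    by auto
  \<comment> \<open>The register holds the previous coefficient of p, which is 0 at the start once t is
      at most the subdegree of p.\<close>
  moreover have "has_computation (Reg x) t (\<lambda>n. [p $$ (t + int n)]) (\<lambda>n. [p $$ (t + int n - 1)])"
    if "t \<le> fls_subdegree p" for t
    using that unfolding has_computation_Reg
    by (intro exI[of _ "\<lambda>n. p $$ (t + int n - 1)"])
      (auto simp: nth_less_subdegree_zero algebra_simps)
  ultimately show ?case
    by (auto simp: coeffs_at_def fls_X_times_conv_shift intro: eventually_mono[OF eventually_le_at_bot])
next
  case (RegOp x)
  then obtain p where "u = [p * fls_X]" "v = [p]"
    by auto
  moreover have "has_computation (RegOp x) t (\<lambda>n. [p $$ (t + int n - 1)]) (\<lambda>n. [p $$ (t + int n)])"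
    if "t \<le> fls_subdegree p" for t
    using that unfolding has_computation_RegOp
    by (intro exI[of _ "\<lambda>n. p $$ (t + int n - 1)"])
      (auto simp: nth_less_subdegree_zero algebra_simps)
  ultimately show ?case
    by (auto simp: coeffs_at_def fls_X_times_conv_shift intro: eventually_mono[OF eventually_le_at_bot])
qed (auto simp: has_computation_stateless stateless_step_coeffs_at intro: always_eventually)

lemma has_computation_den_fls:
  fixes c :: "'k::field circuit"
  assumes "t \<le> 0" and "has_computation c t U V"
  shows "(fls_of_labels t U, fls_of_labels t V) \<in> den_fls c"
  using assms(2)
proof (induction c arbitrary: U V)
  case (Seq c d)
  then obtain W where "has_computation c t U W" "has_computation d t W V"
    by (auto simp: has_computation_Seq)
  with Seq.IH have "(fls_of_labels t U, fls_of_labels t W) \<in> den_fls c"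
    "(fls_of_labels t W, fls_of_labels t V) \<in> den_fls d"
    by blast+
  then show ?case
    by auto
next
  case (Par c d)
  then obtain U1 U2 V1 V2 where UV: "U = (\<lambda>n. U1 n @ U2 n)" "V = (\<lambda>n. V1 n @ V2 n)"
    and c: "has_computation c t U1 V1" and d: "has_computation d t U2 V2"
    by (auto simp: has_computation_Par)
  have "fls_of_labels t U = fls_of_labels t U1 @ fls_of_labels t U2"
    "fls_of_labels t V = fls_of_labels t V1 @ fls_of_labels t V2"
    unfolding UV by (rule fls_of_labels_append, rule has_computation_length[OF c])+
  with Par.IH(1)[OF c] Par.IH(2)[OF d] show ?case
    by auto
next
  case (Reg x)
  then obtain b where "b 0 = 0" "U = (\<lambda>n. [b (Suc n)])" "V = (\<lambda>n. [b n])"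
    by (auto simp: has_computation_Reg)
  then show ?case
    by (simp add: fls_of_labels_def fls_from_Suc_times_X)
next
  case (RegOp x)
  then obtain b where "b 0 = 0" "U = (\<lambda>n. [b n])" "V = (\<lambda>n. [b (Suc n)])"
    by (auto simp: has_computation_RegOp)
  then show ?case
    by (simp add: fls_of_labels_def fls_from_Suc_times_X)
qed (use assms(1) in
  \<open>auto simp del: den_in.simps intro!: stateless_has_computation_den_fls\<close>)

theorem proposition5:
  fixes c :: "'k::field circuit"
  assumes "c \<in> ACirc 0 0"
  shows "den c = {([], [])} \<longleftrightarrow> diverges c"
proof
  assume "den c = {([], [])}"
  then have "([], []) \<in> den_fls c"
    by (simp flip: Nil_mem_den_iff_den_fls)
  from den_fls_has_computation[OF this] obtain t0
    where "\<And>t. t \<le> t0 \<Longrightarrow> has_computation c t (\<lambda>_. []) (\<lambda>_. [])"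
    by (auto simp: coeffs_at_def eventually_at_bot_linorder)
  then show "diverges c"
    unfolding diverges_iff_has_computation by (intro exI[of _ "min t0 0"]) simp
next
  assume "diverges c"
  then obtain t where "t \<le> 0" "has_computation c t (\<lambda>_. []) (\<lambda>_. [])"
    by (auto simp: diverges_iff_has_computation)
  then have "([], []) \<in> den c"
    using has_computation_den_fls Nil_mem_den_iff_den_fls by (fastforce simp: fls_of_labels_def)
  moreover have "den c \<subseteq> {([], [])}"
    using assms den_in_length by (fastforce simp: ACirc_def den_eq_den_in)
  ultimately show "den c = {([], [])}"
    by blast
qed

end
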